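(* Let $G$ be a connected graph and let $H$ be a connected component of the complement $\overline{G}$ such that $H$ is isomorphic to the complete graph $K_n$ for some $n\geq 2$. Then no vertex of $H$ is a basis forced vertex of $G$.
   Context: All graphs are finite and simple. $\overline{G}$ denotes the complement graph. For vertices $u,v$ of a connected graph $G$, $d(u,v)$ is the length of a shortest $u$–$v$ path. A set $R\subseteq V(G)$ is a resolving set if for all distinct $x,y\in V(G)$ there is $r\in R$ with $d(r,x)\neq d(r,y)$. The metric dimension $\dim(G)$ is the minimum cardinality of a resolving set, and a resolving set of cardinality $\dim(G)$ is a metric basis. A vertex is a basis forced vertex if it belongs to every metric basis of $G$. *)

theory Defs
  imports Main
begin

definition simple_graph :: "'a set \<Rightarrow> ('a \<Rightarrow> 'a \<Rightarrow> bool) \<Rightarrow> bool" where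
  "simple_graph V E \<longleftrightarrow> finite V \<and> (\<forall>x y. E x y \<longrightarrow> x \<in> V \<and> y \<in> V)
     \<and> (\<forall>x y. E x y \<longrightarrow> E y x) \<and> (\<forall>x. \<not> E x x)"

definition connected_graph :: "'a set \<Rightarrow> ('a \<Rightarrow> 'a \<Rightarrow> bool) \<Rightarrow> bool" where
  "connected_graph V E \<longleftrightarrow> V \<noteq> {} \<and> (\<forall>u\<in>V. \<forall>v\<in>V. E\<^sup>*\<^sup>* u v)"

definition gdist :: "('a \<Rightarrow> 'a \<Rightarrow> bool) \<Rightarrow> 'a \<Rightarrow> 'a \<Rightarrow> nat" where
  "gdist E u v = (LEAST n. (E ^^ n) u v)"

definition compl_graph :: "'a set \<Rightarrow> ('a \<Rightarrow> 'a \<Rightarrow> bool) \<Rightarrow> 'a \<Rightarrow> 'a \<Rightarrow> bool" where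
  "compl_graph V E x y \<longleftrightarrow> x \<in> V \<and> y \<in> V \<and> x \<noteq> y \<and> \<not> E x y"

definition induced :: "('a \<Rightarrow> 'a \<Rightarrow> bool) \<Rightarrow> 'a set \<Rightarrow> 'a \<Rightarrow> 'a \<Rightarrow> bool" where
  "induced E C x y \<longleftrightarrow> x \<in> C \<and> y \<in> C \<and> E x y"

definition is_component :: "'a set \<Rightarrow> ('a \<Rightarrow> 'a \<Rightarrow> bool) \<Rightarrow> 'a set \<Rightarrow> bool" where
  "is_component V E C \<longleftrightarrow> (\<exists>v\<in>V. C = {u \<in> V. E\<^sup>*\<^sup>* v u})"

definition graph_iso :: "'a set \<Rightarrow> ('a \<Rightarrow> 'a \<Rightarrow> bool) \<Rightarrow> 'b set \<Rightarrow> ('b \<Rightarrow> 'b \<Rightarrow> bool) \<Rightarrow> bool" where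
  "graph_iso V1 E1 V2 E2 \<longleftrightarrow> (\<exists>f. bij_betw f V1 V2 \<and>
     (\<forall>x\<in>V1. \<forall>y\<in>V1. E1 x y \<longleftrightarrow> E2 (f x) (f y)))"

definition K_verts :: "nat \<Rightarrow> nat set" where
  "K_verts n = {0..<n}"

definition K_edges :: "nat \<Rightarrow> nat \<Rightarrow> nat \<Rightarrow> bool" where
  "K_edges n i j \<longleftrightarrow> i < n \<and> j < n \<and> i \<noteq> j"

definition resolving_set :: "'a set \<Rightarrow> ('a \<Rightarrow> 'a \<Rightarrow> bool) \<Rightarrow> 'a set \<Rightarrow> bool" where
  "resolving_set V E R \<longleftrightarrow> R \<subseteq> V \<and>
     (\<forall>x\<in>V. \<forall>y\<in>V. x \<noteq> y \<longrightarrow> (\<exists>r\<in>R. gdist E r x \<noteq> gdist E r y))"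

definition metric_dim :: "'a set \<Rightarrow> ('a \<Rightarrow> 'a \<Rightarrow> bool) \<Rightarrow> nat" where
  "metric_dim V E = Min (card ` {R. resolving_set V E R})"

definition metric_basis :: "'a set \<Rightarrow> ('a \<Rightarrow> 'a \<Rightarrow> bool) \<Rightarrow> 'a set \<Rightarrow> bool" where
  "metric_basis V E R \<longleftrightarrow> resolving_set V E R \<and> card R = metric_dim V E"

definition basis_forced :: "'a set \<Rightarrow> ('a \<Rightarrow> 'a \<Rightarrow> bool) \<Rightarrow> 'a \<Rightarrow> bool" where
  "basis_forced V E v \<longleftrightarrow> (\<forall>R. metric_basis V E R \<longrightarrow> v \<in> R)"

end

theory Submission
  imports Defs
begin

text \<open>
  Since \<open>C\<close> is a clique of the complement and a whole component of it, \<open>C\<close> is an independent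
  set of \<open>G\<close> all of whose vertices are adjacent to every vertex outside \<open>C\<close>. Hence any two
  vertices of \<open>C\<close> are twins, seen at equal distance from every third vertex, and a resolving
  set contains all but at most one vertex of \<open>C\<close>. Given a basis \<open>R\<close> containing \<open>v\<close>, exchange \<open>v\<close>
  for some \<open>w \<in> C\<close> such that \<open>C - {v, w} \<subseteq> R\<close>: the result is a resolving set of at most
  the same size avoiding \<open>v\<close>. The only pairs needing care are \<open>(v, z)\<close>: for \<open>z \<in> C\<close> the vertex
  \<open>z\<close> itself lies in the new set, and for \<open>z \<notin> C\<close> it is adjacent to \<open>w\<close> whereas \<open>v\<close> is not.
\<close>

lemma relpowp_symp:
  assumes "symp E" and "(E ^^ n) a b"
  shows "(E ^^ n) b a"
  using assms(2)
proof (induction n arbitrary: a b)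
  case 0
  then show ?case by simp
next
  case (Suc n)
  then obtain c where "(E ^^ n) a c" and "E c b"
    by (auto elim: relpowp_Suc_E)
  then show ?case
    using Suc.IH \<open>symp E\<close> by (meson relpowp_Suc_I2 sympD)
qed

lemma gdist_sym:
  assumes "symp E"
  shows "gdist E a b = gdist E b a"
  unfolding gdist_def using relpowp_symp[OF assms] by metis

lemma gdist_walk:
  assumes "E\<^sup>*\<^sup>* a b"
  shows "(E ^^ gdist E a b) a b"
  unfolding gdist_def using assms by (metis LeastI rtranclp_imp_relpowp)

lemma gdist_le:
  assumes "(E ^^ n) a b"
  shows "gdist E a b \<le> n"
  unfolding gdist_def using assms by (rule Least_le)

lemma gdist_eq_0_iff:
  assumes "E\<^sup>*\<^sup>* a b"
  shows "gdist E a b = 0 \<longleftrightarrow> a = b"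
  using gdist_walk[OF assms] gdist_le[of 0 E a a] by auto

lemma gdist_eq_1_iff:
  assumes "E\<^sup>*\<^sup>* a b" and "a \<noteq> b"
  shows "gdist E a b = 1 \<longleftrightarrow> E a b"
  using gdist_walk[OF assms(1)] gdist_le[of 1 E a b] gdist_eq_0_iff[OF assms(1)] assms(2)
  by (metis le_neq_implies_less less_one relpowp_1)

lemma gdist_from_endpoint_neq:
  assumes "connected_graph V E" and "x \<in> V" and "y \<in> V" and "x \<noteq> y"
  shows "gdist E x x \<noteq> gdist E x y"
  using assms gdist_eq_0_iff[of E x y] gdist_eq_0_iff[of E x x]
  unfolding connected_graph_def by auto

definition twins :: "('a \<Rightarrow> 'a \<Rightarrow> bool) \<Rightarrow> 'a \<Rightarrow> 'a \<Rightarrow> bool" where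
  "twins E a b \<longleftrightarrow> (\<forall>u. E u a \<longleftrightarrow> E u b)"

lemma twins_relpowp:
  assumes "twins E a b" and "r \<noteq> a" and "(E ^^ n) r a"
  shows "(E ^^ n) r b"
proof (cases n)
  case 0
  then show ?thesis using assms by simp
next
  case (Suc m)
  then obtain u where "(E ^^ m) r u" and "E u a"
    using assms(3) by (auto elim: relpowp_Suc_E)
  then show ?thesis
    using assms(1) Suc unfolding twins_def by (meson relpowp_Suc_I)
qed

lemma twins_gdist:
  assumes "twins E a b" and "r \<noteq> a" and "r \<noteq> b"
  shows "gdist E r a = gdist E r b"
proof -
  have "twins E b a" using assms(1) unfolding twins_def by simp
  then have "(E ^^ n) r a \<longleftrightarrow> (E ^^ n) r b" for n
    using twins_relpowp assms by metis
  then show ?thesis unfolding gdist_def by simp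
qed

lemma resolving_set_twins:
  assumes "resolving_set V E R" and "twins E a b" and "a \<in> V" and "b \<in> V" and "a \<noteq> b"
  shows "a \<in> R \<or> b \<in> R"
  using assms twins_gdist unfolding resolving_set_def by metis

lemma resolving_set_vertices:
  assumes "connected_graph V E"
  shows "resolving_set V E V"
  unfolding resolving_set_def using gdist_from_endpoint_neq[OF assms] by blast

lemma finite_resolving_set_cards:
  assumes "finite V"
  shows "finite (card ` {R. resolving_set V E R})"
proof -
  have "{R. resolving_set V E R} \<subseteq> Pow V"
    unfolding resolving_set_def by auto
  then show ?thesis
    using assms by (meson finite_Pow_iff finite_imageI finite_subset)
qed

lemma metric_dim_le_card:
  assumes "finite V" and "resolving_set V E R"
  shows "metric_dim V E \<le> card R"
  unfolding metric_dim_def using finite_resolving_set_cards[OF assms(1)] assms(2)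
  by (intro Min_le) auto

lemma metric_basis_exists:
  assumes "finite V" and "connected_graph V E"
  obtains R where "metric_basis V E R"
proof -
  have "metric_dim V E \<in> card ` {R. resolving_set V E R}"
    unfolding metric_dim_def using finite_resolving_set_cards[OF assms(1)]
      resolving_set_vertices[OF assms(2)] by (intro Min_in) auto
  then show ?thesis
    using that unfolding metric_basis_def by auto
qed

lemma compl_component_joined:
  assumes "is_component V (compl_graph V E) C" and "x \<in> C" and "u \<in> V - C"
  shows "E x u"
proof (rule ccontr)
  assume "\<not> E x u"
  obtain c where C: "C = {u \<in> V. (compl_graph V E)\<^sup>*\<^sup>* c u}"
    using assms(1) unfolding is_component_def by auto
  have "compl_graph V E x u"
    using \<open>\<not> E x u\<close> assms(2,3) C unfolding compl_graph_def by auto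
  then have "(compl_graph V E)\<^sup>*\<^sup>* c u"
    using assms(2) C by (auto intro: rtranclp.rtrancl_into_rtrancl)
  then show False using assms(3) C by auto
qed

lemma compl_component_complete_independent:
  assumes "simple_graph V E"
    and "graph_iso C (induced (compl_graph V E) C) (K_verts n) (K_edges n)"
    and "x \<in> C" and "y \<in> C"
  shows "\<not> E x y"
proof (cases "x = y")
  case True
  then show ?thesis using assms(1) unfolding simple_graph_def by auto
next
  case False
  obtain f where f: "bij_betw f C {0..<n}"
    and iso: "\<forall>x\<in>C. \<forall>y\<in>C. induced (compl_graph V E) C x y \<longleftrightarrow> K_edges n (f x) (f y)"
    using assms(2) unfolding graph_iso_def K_verts_def by auto
  have "K_edges n (f x) (f y)"
    using f False assms(3,4) unfolding K_edges_def bij_betw_def inj_on_def by auto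
  then show ?thesis
    using iso assms(3,4) unfolding induced_def compl_graph_def by auto
qed

lemma graph_iso_K_card:
  assumes "graph_iso C (induced (compl_graph V E) C) (K_verts n) (K_edges n)"
  shows "card C = n"
  using assms unfolding graph_iso_def K_verts_def by (auto dest: bij_betw_same_card)

lemma twins_if_independent_joined:
  assumes "simple_graph V E"
    and indep: "\<And>x y. x \<in> C \<Longrightarrow> y \<in> C \<Longrightarrow> \<not> E x y"
    and joined: "\<And>x u. x \<in> C \<Longrightarrow> u \<in> V - C \<Longrightarrow> E x u"
    and "a \<in> C" and "b \<in> C"
  shows "twins E a b"
proof -
  have "E u b" if "E u a" "a \<in> C" "b \<in> C" for a b u
  proof -
    have "u \<in> V - C"
      using that indep assms(1) unfolding simple_graph_def by blast
    then show ?thesis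
      using joined[OF \<open>b \<in> C\<close>] assms(1) unfolding simple_graph_def by blast
  qed
  then show ?thesis
    using assms(4,5) unfolding twins_def by blast
qed

lemma resolving_set_exchange:
  assumes G: "simple_graph V E" "connected_graph V E"
    and "C \<subseteq> V"
    and indep: "\<And>x y. x \<in> C \<Longrightarrow> y \<in> C \<Longrightarrow> \<not> E x y"
    and joined: "\<And>x u. x \<in> C \<Longrightarrow> u \<in> V - C \<Longrightarrow> E x u"
    and R: "resolving_set V E R"
    and "v \<in> C" and "w \<in> C" and "v \<noteq> w" and "C - {v, w} \<subseteq> R"
  shows "resolving_set V E (insert w (R - {v}))" (is "resolving_set V E ?R")
proof -
  define separated where "separated x y \<longleftrightarrow> (\<exists>r\<in>?R. gdist E r x \<noteq> gdist E r y)" for x y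
  have separated_sym: "separated y x" if "separated x y" for x y
    using that unfolding separated_def by (metis (no_types, lifting))
  have reach: "E\<^sup>*\<^sup>* x y" if "x \<in> V" "y \<in> V" for x y
    using G(2) that unfolding connected_graph_def by blast
  have "v \<in> V" "w \<in> V" using \<open>v \<in> C\<close> \<open>w \<in> C\<close> \<open>C \<subseteq> V\<close> by auto
  have separated_from_member: "separated p q" if "p \<in> ?R" "p \<in> V" "q \<in> V" "p \<noteq> q" for p q
    using that gdist_from_endpoint_neq[OF G(2)] unfolding separated_def by blast
  have v_separated: "separated v z" if "z \<in> V" "z \<noteq> v" "z \<noteq> w" for z
  proof (cases "z \<in> C")
    case True
    then have "z \<in> ?R" using that \<open>C - {v, w} \<subseteq> R\<close> by auto
    then show ?thesis
      using separated_from_member[of z v] separated_sym that \<open>v \<in> V\<close> by blast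
  next
    case False
    then have "E w z" using joined[OF \<open>w \<in> C\<close>] that(1) by blast
    then have "gdist E w z = 1"
      using gdist_eq_1_iff[OF reach[OF \<open>w \<in> V\<close> that(1)]] that(3) by auto
    moreover have "gdist E w v \<noteq> 1"
      using gdist_eq_1_iff[OF reach[OF \<open>w \<in> V\<close> \<open>v \<in> V\<close>]] indep \<open>v \<in> C\<close> \<open>w \<in> C\<close> \<open>v \<noteq> w\<close>
      by auto
    ultimately show ?thesis unfolding separated_def by auto
  qed
  have "separated x y" if xy: "x \<in> V" "y \<in> V" "x \<noteq> y" for x y
  proof -
    obtain r where "r \<in> R" and r: "gdist E r x \<noteq> gdist E r y"
      using R xy unfolding resolving_set_def by blast
    consider "r \<noteq> v" | "w \<in> {x, y}" | "v \<in> {x, y}" "w \<notin> {x, y}" | "r = v" "v \<notin> {x, y}" "w \<notin> {x, y}"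
      by blast
    then show ?thesis
    proof cases
      case 1
      then show ?thesis using \<open>r \<in> R\<close> r unfolding separated_def by blast
    next
      case 2
      then show ?thesis using separated_from_member separated_sym xy \<open>w \<in> V\<close> by blast
    next
      case 3
      then show ?thesis using v_separated separated_sym xy by blast
    next
      case 4
      have sym: "symp E"
        using G(1) unfolding simple_graph_def symp_def by blast
      have "twins E v w"
        using twins_if_independent_joined[OF G(1) indep joined \<open>v \<in> C\<close> \<open>w \<in> C\<close>] .
      then have "gdist E v p = gdist E w p" if "p \<notin> {v, w}" for p
        using twins_gdist[of E v w p] that gdist_sym[OF sym] by auto
      then have "gdist E w x \<noteq> gdist E w y"
        using r 4 by auto
      then show ?thesis unfolding separated_def by blast
    qed
  qed
  moreover have "?R \<subseteq> V"
    using R \<open>w \<in> V\<close> unfolding resolving_set_def by auto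
  ultimately show ?thesis
    unfolding resolving_set_def separated_def by blast
qed

lemma not_basis_forced_if_independent_joined:
  assumes G: "simple_graph V E" "connected_graph V E"
    and "C \<subseteq> V"
    and indep: "\<And>x y. x \<in> C \<Longrightarrow> y \<in> C \<Longrightarrow> \<not> E x y"
    and joined: "\<And>x u. x \<in> C \<Longrightarrow> u \<in> V - C \<Longrightarrow> E x u"
    and "card C \<ge> 2" and "v \<in> C"
  shows "\<not> basis_forced V E v"
proof -
  have "finite V" using G(1) unfolding simple_graph_def by blast
  obtain R where "metric_basis V E R"
    using metric_basis_exists[OF \<open>finite V\<close> G(2)] .
  then have R: "resolving_set V E R" and card_R: "card R = metric_dim V E"
    unfolding metric_basis_def by auto
  have "C - {v} \<noteq> {}"
  proof
    assume "C - {v} = {}"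
    then have "C = {v}" using \<open>v \<in> C\<close> by blast
    then show False using \<open>card C \<ge> 2\<close> by simp
  qed
  obtain w where "w \<in> C" "w \<noteq> v" and rest_in_R: "C - {v, w} \<subseteq> R"
  proof (cases "\<exists>w\<in>C - {v}. w \<notin> R")
    case True
    then obtain w where "w \<in> C - {v}" "w \<notin> R" by blast
    moreover have "z \<in> R" if "z \<in> C - {v, w}" for z
      using resolving_set_twins[OF R twins_if_independent_joined[OF G(1) indep joined]]
        that \<open>w \<in> C - {v}\<close> \<open>w \<notin> R\<close> \<open>C \<subseteq> V\<close> by blast
    ultimately show ?thesis using that by blast
  next
    case False
    then show ?thesis using that \<open>C - {v} \<noteq> {}\<close> by blast
  qed
  show ?thesis
  proof (cases "v \<in> R")
    case False
    then show ?thesis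
      using \<open>metric_basis V E R\<close> unfolding basis_forced_def by blast
  next
    case True
    let ?R = "insert w (R - {v})"
    have res: "resolving_set V E ?R"
      using resolving_set_exchange[OF G \<open>C \<subseteq> V\<close> indep joined R \<open>v \<in> C\<close> \<open>w \<in> C\<close>]
        \<open>w \<noteq> v\<close> rest_in_R by auto
    have "finite R"
      using R \<open>finite V\<close> unfolding resolving_set_def by (meson finite_subset)
    moreover have "card R > 0"
      using True \<open>finite R\<close> card_gt_0_iff by blast
    ultimately have "card ?R \<le> card R"
      using True by (simp add: card_insert_if card_Diff_singleton)
    then have "metric_basis V E ?R"
      using res card_R metric_dim_le_card[OF \<open>finite V\<close> res] unfolding metric_basis_def by simp
    moreover have "v \<notin> ?R" using \<open>w \<noteq> v\<close> by blast
    ultimately show ?thesis unfolding basis_forced_def by blast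
  qed
qed

theorem lemma5:
  fixes V :: "'a set" and E :: "'a \<Rightarrow> 'a \<Rightarrow> bool" and C :: "'a set" and n :: nat
  assumes "simple_graph V E"
    and "connected_graph V E"
    and "is_component V (compl_graph V E) C"
    and "graph_iso C (induced (compl_graph V E) C) (K_verts n) (K_edges n)"
    and "n \<ge> 2"
  shows "\<forall>v\<in>C. \<not> basis_forced V E v"
proof
  fix v assume "v \<in> C"
  have "C \<subseteq> V" using assms(3) unfolding is_component_def by auto
  show "\<not> basis_forced V E v"
    using not_basis_forced_if_independent_joined[OF assms(1,2) \<open>C \<subseteq> V\<close>]
      compl_component_complete_independent[OF assms(1,4)]
      compl_component_joined[OF assms(3)]
      graph_iso_K_card[OF assms(4)] assms(5) \<open>v \<in> C\<close>
    by blast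
qed

end
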